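(* For an odd integer $n>1$ and an integer $m\geq 3$, $$\chi_{ld}(P_{m}[\overline{K_{n}}])\leq \begin{cases}4 &\text{if } m\equiv 1 \pmod 4,\\ 3 &\text{if } m\equiv 3 \pmod 4,\\ 4 &\text{if $m$ is even.}\end{cases}$$
   Context: All graphs are finite, simple and undirected. For a graph $G=(V,E)$ of order $N$ without isolated vertices, a bijection $f\colon V\to\{1,2,\dots,N\}$ is a local distance antimagic labeling if $w(u)\neq w(v)$ for every edge $uv$, where $w(u)=\sum_{x\in N(u)}f(x)$ and $N(u)$ is the open neighborhood of $u$. $\chi_{ld}(G)$ is the minimum number of distinct weights over all local distance antimagic labelings of $G$. $P_m$ is the path on $m$ vertices, $\overline{K_n}$ the edgeless graph on $n$ vertices. The lexicographic product $G[H]$ has vertex set $V(G)\times V(H)$, with $(g,h)$ adjacent to $(g',h')$ iff $gg'\in E(G)$, or $g=g'$ and $hh'\in E(H)$. *)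

theory Defs
  imports Main
begin

text \<open>A finite simple graph is given by a vertex set V and an adjacency
relation E (assumed symmetric and irreflexive on V where relevant).\<close>

definition nbhd :: "'a set \<Rightarrow> ('a \<Rightarrow> 'a \<Rightarrow> bool) \<Rightarrow> 'a \<Rightarrow> 'a set" where
  "nbhd V E u = {x \<in> V. E u x}"

definition ld_weight :: "'a set \<Rightarrow> ('a \<Rightarrow> 'a \<Rightarrow> bool) \<Rightarrow> ('a \<Rightarrow> nat) \<Rightarrow> 'a \<Rightarrow> nat" where
  "ld_weight V E f u = (\<Sum>x \<in> nbhd V E u. f x)"

definition local_dist_antimagic :: "'a set \<Rightarrow> ('a \<Rightarrow> 'a \<Rightarrow> bool) \<Rightarrow> ('a \<Rightarrow> nat) \<Rightarrow> bool" where
  "local_dist_antimagic V E f \<longleftrightarrow>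
     bij_betw f V {1..card V} \<and>
     (\<forall>u\<in>V. \<forall>v\<in>V. E u v \<longrightarrow> ld_weight V E f u \<noteq> ld_weight V E f v)"

definition chi_ld :: "'a set \<Rightarrow> ('a \<Rightarrow> 'a \<Rightarrow> bool) \<Rightarrow> nat" where
  "chi_ld V E = Min {card (ld_weight V E f ` V) | f. local_dist_antimagic V E f}"

definition path_V :: "nat \<Rightarrow> nat set" where "path_V m = {1..m}"
definition path_E :: "nat \<Rightarrow> nat \<Rightarrow> bool" where
  "path_E i j \<longleftrightarrow> i + 1 = j \<or> j + 1 = i"

definition empty_V :: "nat \<Rightarrow> nat set" where "empty_V n = {1..n}"
definition empty_E :: "nat \<Rightarrow> nat \<Rightarrow> bool" where "empty_E a b \<longleftrightarrow> False"

definition lex_V :: "'a set \<Rightarrow> 'b set \<Rightarrow> ('a \<times> 'b) set" where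
  "lex_V VG VH = VG \<times> VH"
definition lex_E :: "('a \<Rightarrow> 'a \<Rightarrow> bool) \<Rightarrow> ('b \<Rightarrow> 'b \<Rightarrow> bool) \<Rightarrow> 'a \<times> 'b \<Rightarrow> 'a \<times> 'b \<Rightarrow> bool" where
  "lex_E EG EH p q \<longleftrightarrow> EG (fst p) (fst q) \<or> (fst p = fst q \<and> EH (snd p) (snd q))"

end

(* Label the copy (i, a) of the path vertex i in layer a by (a - 1) m + sigma_a(i), where
   every sigma_a permutes {1..m}. In P_m[K_n-bar] the weight of (i, a) is the sum of the
   column sums of the path neighbours of i. Take sigma_1 = id, sigma_2 = sigma_3 = alpha,
   where i + 2 alpha(i) depends only on the parity of i, and let the remaining n - 3 layers
   alternate between id and the reversal i -> m + 1 - i, so that each such pair adds m + 1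
   to every column sum. Then the column sum of i is A or B according as i is odd or even,
   with A < B < 2A. The neighbours of i have the opposite parity, so odd vertices get weight
   B or 2B and even vertices A or 2A: adjacent weights differ and at most four weights occur.
   For odd m every even vertex is interior and has weight 2A, leaving three weights; this
   holds for m = 1 (mod 4) as well. *)

theory Submission
  imports Defs
begin

lemma chi_ld_le_card_weights:
  assumes "finite V" and "local_dist_antimagic V E f"
  shows "chi_ld V E \<le> card (ld_weight V E f ` V)"
proof -
  have "{card (ld_weight V E g ` V) | g. local_dist_antimagic V E g} \<subseteq> {0..card V}"
    using card_image_le[OF assms(1)] by auto
  then show ?thesis
    unfolding chi_ld_def using assms(2) by (intro Min_le) (auto intro: finite_subset)
qed

lemma nbhd_lex_empty:
  "nbhd (lex_V VG VH) (lex_E EG empty_E) (i, a) = nbhd VG EG i \<times> VH"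
  by (auto simp: nbhd_def lex_V_def lex_E_def empty_E_def)

lemma ld_weight_lex_empty:
  "ld_weight (lex_V VG VH) (lex_E EG empty_E) f (i, a) = (\<Sum>j\<in>nbhd VG EG i. \<Sum>b\<in>VH. f (j, b))"
  unfolding ld_weight_def nbhd_lex_empty by (simp add: sum.cartesian_product)

lemma nbhd_path: "nbhd (path_V m) path_E i = {i - 1, i + 1} \<inter> {1..m}"
  by (auto simp: nbhd_def path_V_def path_E_def)

lemma card_nbhd_path:
  assumes "nbhd (path_V m) path_E i \<noteq> {}"
  shows "card (nbhd (path_V m) path_E i) \<in> {1, 2}"
proof -
  have "card ({i - 1, i + 1} \<inter> {1..m}) \<le> card {i - 1, i + 1}"
    by (rule card_mono) auto
  also have "\<dots> \<le> 2" by (simp add: card_insert_if)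
  moreover have "card ({i - 1, i + 1} \<inter> {1..m}) > 0"
    using assms unfolding nbhd_path by (simp add: card_gt_0_iff)
  ultimately show ?thesis unfolding nbhd_path by auto
qed

lemma nbhd_path_nonempty:
  assumes "i \<in> {1..m}" and "m \<ge> 2"
  shows "nbhd (path_V m) path_E i \<noteq> {}"
  using assms unfolding nbhd_path by (cases "i = 1") auto

lemma card_nbhd_path_inner:
  assumes "1 < i" and "i < m"
  shows "card (nbhd (path_V m) path_E i) = 2"
proof -
  have "{i - 1, i + 1} \<inter> {1..m} = {i - 1, i + 1}" using assms by auto
  then show ?thesis using assms unfolding nbhd_path by simp
qed

lemma ld_weight_path_lex_parity:
  assumes "\<And>j. j \<in> {1..m} \<Longrightarrow> (\<Sum>b\<in>VH. f (j, b)) = (if odd j then A else B)"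
  shows "ld_weight (lex_V (path_V m) VH) (lex_E path_E empty_E) f (i, a)
           = card (nbhd (path_V m) path_E i) * (if odd i then B else A)"
proof -
  have "(\<Sum>b\<in>VH. f (j, b)) = (if odd i then B else A)" if "j \<in> nbhd (path_V m) path_E i" for j
    using that assms[of j] unfolding nbhd_path by auto
  then show ?thesis unfolding ld_weight_lex_empty by simp
qed

lemma local_dist_antimagic_path_lex:
  fixes m A B :: nat and VH :: "nat set"
  defines "V \<equiv> lex_V (path_V m) VH" and "E \<equiv> lex_E path_E empty_E"
  assumes bij: "bij_betw f V {1..card V}"
    and cols: "\<And>j. j \<in> {1..m} \<Longrightarrow> (\<Sum>b\<in>VH. f (j, b)) = (if odd j then A else B)"
    and AB: "A < B" "B < 2 * A"
  shows "local_dist_antimagic V E f"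
  unfolding local_dist_antimagic_def
proof (intro conjI bij ballI impI)
  fix u v assume "u \<in> V" "v \<in> V" "E u v"
  then obtain i a j b where uv: "u = (i, a)" "v = (j, b)" "path_E i j"
    by (cases u, cases v) (auto simp: E_def lex_E_def empty_E_def)
  define d where "d x = card (nbhd (path_V m) path_E x)" for x
  have "i \<in> nbhd (path_V m) path_E j" "j \<in> nbhd (path_V m) path_E i"
    using \<open>u \<in> V\<close> \<open>v \<in> V\<close> uv
    by (auto simp: V_def lex_V_def nbhd_def path_V_def path_E_def)
  then have "d i \<in> {1, 2}" "d j \<in> {1, 2}"
    unfolding d_def using card_nbhd_path[of m i] card_nbhd_path[of m j] by blast+
  moreover have "odd i \<longleftrightarrow> even j" using uv(3) by (auto simp: path_E_def)
  ultimately have "d i * (if odd i then B else A) \<noteq> d j * (if odd j then B else A)"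
    using AB by auto
  moreover have "ld_weight V E f (x, c) = d x * (if odd x then B else A)" for x c
    unfolding V_def E_def d_def by (rule ld_weight_path_lex_parity[OF cols])
  ultimately show "ld_weight V E f u \<noteq> ld_weight V E f v"
    unfolding uv by simp
qed

lemma card_ld_weights_path_lex_parity:
  fixes m A B :: nat and VH :: "nat set"
  assumes cols: "\<And>j. j \<in> {1..m} \<Longrightarrow> (\<Sum>b\<in>VH. f (j, b)) = (if odd j then A else B)"
    and "m \<ge> 2"
  shows "card (ld_weight (lex_V (path_V m) VH) (lex_E path_E empty_E) f ` lex_V (path_V m) VH)
           \<le> (if odd m then 3 else 4)"
proof -
  define W where "W = (if odd m then {2 * A, B, 2 * B} else {A, 2 * A, B, 2 * B})"
  have "ld_weight (lex_V (path_V m) VH) (lex_E path_E empty_E) f ` lex_V (path_V m) VH \<subseteq> W"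
  proof
    fix w assume "w \<in> ld_weight (lex_V (path_V m) VH) (lex_E path_E empty_E) f ` lex_V (path_V m) VH"
    then obtain i a where i: "i \<in> {1..m}"
      and "w = ld_weight (lex_V (path_V m) VH) (lex_E path_E empty_E) f (i, a)"
      by (auto simp: lex_V_def path_V_def)
    then have w: "w = card (nbhd (path_V m) path_E i) * (if odd i then B else A)"
      by (simp only: ld_weight_path_lex_parity[OF cols])
    have "card (nbhd (path_V m) path_E i) \<in> {1, 2}"
      using card_nbhd_path nbhd_path_nonempty[OF i assms(2)] by blast
    moreover have "card (nbhd (path_V m) path_E i) = 2" if "odd m" "even i"
    proof (rule card_nbhd_path_inner)
      show "1 < i" using i \<open>even i\<close> by (cases "i = 1") auto
      show "i < m" using i that by (cases "i = m") auto
    qed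
    ultimately show "w \<in> W" unfolding w W_def by auto
  qed
  then have "card (ld_weight (lex_V (path_V m) VH) (lex_E path_E empty_E) f ` lex_V (path_V m) VH)
      \<le> card W"
    by (rule card_mono[rotated]) (simp add: W_def)
  also have "card W \<le> (if odd m then 3 else 4)"
    unfolding W_def by (auto simp: card_insert_if)
  finally show ?thesis .
qed

definition layered_label :: "nat \<Rightarrow> (nat \<Rightarrow> nat \<Rightarrow> nat) \<Rightarrow> nat \<times> nat \<Rightarrow> nat" where
  "layered_label m \<sigma> = (\<lambda>(i, a). (a - 1) * m + \<sigma> a i)"

lemma block_index_eq:
  fixes x y s t m :: nat
  assumes "x * m + s = y * m + t" and "s \<in> {1..m}" and "t \<in> {1..m}"
  shows "x = y"
proof -
  have "(x * m + (s - 1)) div m = x" using assms(2) by (subst div_mult_self3) auto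
  moreover have "(y * m + (t - 1)) div m = y" using assms(3) by (subst div_mult_self3) auto
  moreover have "x * m + (s - 1) = y * m + (t - 1)"
    using assms by auto
  ultimately show "x = y" by simp
qed

lemma layered_label_bij:
  assumes "\<And>a. a \<in> {1..n} \<Longrightarrow> bij_betw (\<sigma> a) {1..m} {1..m}"
  shows "bij_betw (layered_label m \<sigma>) ({1..m} \<times> {1..n}) {1..m * n}"
proof -
  have range: "\<sigma> a i \<in> {1..m}" if "a \<in> {1..n}" "i \<in> {1..m}" for a i
    using assms[OF that(1)] that(2) by (auto dest: bij_betw_apply)
  have inj: "inj_on (layered_label m \<sigma>) ({1..m} \<times> {1..n})"
  proof (rule inj_onI)
    fix p q
    assume "p \<in> {1..m} \<times> {1..n}" "q \<in> {1..m} \<times> {1..n}"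
      and "layered_label m \<sigma> p = layered_label m \<sigma> q"
    then obtain i a j b where pq: "p = (i, a)" "q = (j, b)"
      and ij: "i \<in> {1..m}" "j \<in> {1..m}" and ab: "a \<in> {1..n}" "b \<in> {1..n}"
      and "layered_label m \<sigma> (i, a) = layered_label m \<sigma> (j, b)"
      by auto
    then have eq: "(a - 1) * m + \<sigma> a i = (b - 1) * m + \<sigma> b j"
      by (simp add: layered_label_def)
    have "a - 1 = b - 1" by (rule block_index_eq[OF eq range range]) (use ij ab in auto)
    then have "a = b" using ab by auto
    moreover from this have "\<sigma> a i = \<sigma> a j" using eq by simp
    then have "i = j" using assms[OF ab(1)] ij by (auto simp: bij_betw_def dest: inj_onD)
    ultimately show "p = q" using pq by simp
  qed
  have "layered_label m \<sigma> ` ({1..m} \<times> {1..n}) \<subseteq> {1..m * n}"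
  proof
    fix y assume "y \<in> layered_label m \<sigma> ` ({1..m} \<times> {1..n})"
    then obtain i a where ia: "i \<in> {1..m}" "a \<in> {1..n}" and y: "y = (a - 1) * m + \<sigma> a i"
      by (auto simp: layered_label_def)
    have "(a - 1) * m + m \<le> m * n"
      using ia(2) mult_le_mono1[of a n m] by (simp add: diff_mult_distrib)
    then show "y \<in> {1..m * n}"
      using range[OF ia(2,1)] y by auto
  qed
  moreover have "card (layered_label m \<sigma> ` ({1..m} \<times> {1..n})) = card {1..m * n}"
    using card_image[OF inj] by (simp add: card_cartesian_product)
  ultimately have "layered_label m \<sigma> ` ({1..m} \<times> {1..n}) = {1..m * n}"
    by (intro card_subset_eq) auto
  with inj show ?thesis by (rule bij_betw_imageI)
qed

lemma sum_layered_label: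
  "(\<Sum>a\<in>A. layered_label m \<sigma> (i, a)) = (\<Sum>a\<in>A. (a - 1) * m) + (\<Sum>a\<in>A. \<sigma> a i)"
  by (simp add: layered_label_def sum.distrib)

definition parity_balancing_perm :: "nat \<Rightarrow> nat \<Rightarrow> nat" where
  "parity_balancing_perm m i = (if odd i then (m + 1) div 2 - i div 2 else m + 1 - i div 2)"

lemma parity_balancing_perm_sum:
  assumes "i \<in> {1..m}"
  shows "i + 2 * parity_balancing_perm m i = (if odd i then 2 * ((m + 1) div 2) + 1 else 2 * m + 2)"
  using assms unfolding parity_balancing_perm_def by (auto elim!: oddE evenE)

lemma parity_balancing_perm_range:
  assumes "i \<in> {1..m}"
  shows "parity_balancing_perm m i \<in> {1..m}"
  using assms unfolding parity_balancing_perm_def by (auto elim!: oddE evenE)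

lemma parity_balancing_perm_le_half_iff:
  assumes "i \<in> {1..m}"
  shows "parity_balancing_perm m i \<le> (m + 1) div 2 \<longleftrightarrow> odd i"
  using assms unfolding parity_balancing_perm_def by (auto elim!: oddE evenE)

lemma parity_balancing_perm_bij: "bij_betw (parity_balancing_perm m) {1..m} {1..m}"
proof -
  have inj: "inj_on (parity_balancing_perm m) {1..m}"
  proof (rule inj_onI)
    fix i j assume ij: "i \<in> {1..m}" "j \<in> {1..m}"
      and eq: "parity_balancing_perm m i = parity_balancing_perm m j"
    then have "odd i \<longleftrightarrow> odd j"
      using parity_balancing_perm_le_half_iff by metis
    then have "i + 2 * parity_balancing_perm m i = j + 2 * parity_balancing_perm m j"
      using parity_balancing_perm_sum[OF ij(1)] parity_balancing_perm_sum[OF ij(2)] by simp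
    then show "i = j" using eq by simp
  qed
  moreover have "parity_balancing_perm m ` {1..m} \<subseteq> {1..m}"
    using parity_balancing_perm_range by blast
  ultimately show ?thesis
    by (simp add: bij_betw_imageI endo_inj_surj)
qed

lemma reverse_perm_bij: "bij_betw (\<lambda>i. m + 1 - i) {1..m} {1..(m::nat)}"
proof -
  have "inj_on (\<lambda>i. m + 1 - i) {1..m}" by (rule inj_onI) auto
  moreover have "(\<lambda>i. m + 1 - i) ` {1..m} \<subseteq> {1..m}" by auto
  ultimately show ?thesis by (simp add: bij_betw_imageI endo_inj_surj)
qed

definition layer_perm :: "nat \<Rightarrow> nat \<Rightarrow> nat \<Rightarrow> nat" where
  "layer_perm m a =
     (if a = 1 then id else if a \<le> 3 then parity_balancing_perm m
      else if even a then id else (\<lambda>i. m + 1 - i))"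

lemma layer_perm_bij: "bij_betw (layer_perm m a) {1..m} {1..m}"
  using parity_balancing_perm_bij[of m] reverse_perm_bij[of m] by (simp add: layer_perm_def)

lemma sum_layer_perm_tail:
  assumes "i \<le> m"
  shows "(\<Sum>a\<in>{4..2 * k + 3}. layer_perm m a i) = k * (m + 1)"
proof (induction k)
  case 0
  then show ?case by simp
next
  case (Suc k)
  have "{4..2 * Suc k + 3} = insert (2 * k + 5) (insert (2 * k + 4) {4..2 * k + 3})" by auto
  then have "(\<Sum>a\<in>{4..2 * Suc k + 3}. layer_perm m a i)
      = layer_perm m (2 * k + 5) i + layer_perm m (2 * k + 4) i + (\<Sum>a\<in>{4..2 * k + 3}. layer_perm m a i)"
    by simp
  also have "\<dots> = (m + 1 - i) + i + k * (m + 1)"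
    using Suc.IH by (simp add: layer_perm_def)
  finally show ?case using assms by simp
qed

lemma sum_layer_perm:
  assumes "n = 2 * k + 3" and "i \<in> {1..m}"
  shows "(\<Sum>a\<in>{1..n}. layer_perm m a i)
           = (if odd i then 2 * ((m + 1) div 2) + 1 else 2 * m + 2) + k * (m + 1)"
proof -
  have "{1..n} = insert 1 (insert 2 (insert 3 {4..2 * k + 3}))" using assms(1) by auto
  then have "(\<Sum>a\<in>{1..n}. layer_perm m a i)
      = i + 2 * parity_balancing_perm m i + (\<Sum>a\<in>{4..2 * k + 3}. layer_perm m a i)"
    by (simp add: layer_perm_def)
  then show ?thesis
    using parity_balancing_perm_sum[OF assms(2)] sum_layer_perm_tail[of i m k] assms(2) by simp
qed

theorem mainTheorem11:
  fixes m n :: nat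
  assumes "odd n" and "n > 1" and "m \<ge> 3"
  shows "chi_ld (lex_V (path_V m) (empty_V n)) (lex_E path_E empty_E)
           \<le> (if m mod 4 = 1 then 4 else if m mod 4 = 3 then 3 else 4)"
proof -
  have "\<exists>k. n = 2 * k + 3" using assms(1,2) by presburger
  then obtain k where n: "n = 2 * k + 3" ..
  define f where "f = layered_label m (layer_perm m)"
  define K where "K = (\<Sum>a\<in>{1..n}. (a - 1) * m) + k * (m + 1)"
  define A where "A = K + 2 * ((m + 1) div 2) + 1"
  define B where "B = K + 2 * m + 2"
  have cols: "(\<Sum>b\<in>empty_V n. f (j, b)) = (if odd j then A else B)" if "j \<in> {1..m}" for j
    using sum_layer_perm[OF n that]
    by (simp add: f_def empty_V_def sum_layered_label A_def B_def K_def)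
  have "(n - 1) * m \<le> (\<Sum>a\<in>{1..n}. (a - 1) * m)"
    by (rule member_le_sum) (use n in auto)
  then have "K > 0" using n assms(3) by (simp add: K_def)
  moreover have "m \<le> 2 * ((m + 1) div 2)" "2 * ((m + 1) div 2) \<le> m + 1" by presburger+
  ultimately have AB: "A < B" "B < 2 * A" using assms(3) by (auto simp: A_def B_def)
  have "bij_betw f (lex_V (path_V m) (empty_V n)) {1..card (lex_V (path_V m) (empty_V n))}"
    using layered_label_bij[of n "layer_perm m" m] layer_perm_bij
    by (simp add: f_def lex_V_def path_V_def empty_V_def card_cartesian_product)
  then have "chi_ld (lex_V (path_V m) (empty_V n)) (lex_E path_E empty_E)
      \<le> card (ld_weight (lex_V (path_V m) (empty_V n)) (lex_E path_E empty_E) f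
                  ` lex_V (path_V m) (empty_V n))"
    by (intro chi_ld_le_card_weights local_dist_antimagic_path_lex[OF _ cols AB])
      (auto simp: lex_V_def path_V_def empty_V_def)
  also have "\<dots> \<le> (if odd m then 3 else 4)"
    using card_ld_weights_path_lex_parity[OF cols] assms(3) by simp
  finally show ?thesis by presburger
qed

end
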